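(* Let $\theta=\mathrm{cf}(\theta)$, $\kappa$ a cardinal, and $\sigma$ a regular cardinal with $\sigma>\kappa^+$ and $|\alpha|^\kappa<\sigma$ for all $\alpha<\sigma$. Let $D$ be a $\sigma$-complete filter on $\theta$ with $\theta\setminus\alpha\in D$ for all $\alpha<\theta$, and for each $\alpha<\theta$ let $\langle\beta^\alpha_\varepsilon:\varepsilon<\kappa\rangle$ be a sequence of ordinals. Then for every $X\subseteq\theta$ with $X\neq\emptyset$ mod $D$ there are a sequence of ordinals $\langle\beta^*_\varepsilon:\varepsilon<\kappa\rangle$ and $w\subseteq\kappa$ such that: (a) if $\varepsilon\in\kappa\setminus w$ then $\sigma\le\mathrm{cf}(\beta^*_\varepsilon)\le\theta$; (b) the set $B$ of $\alpha\in X$ such that $\beta^\alpha_\varepsilon=\beta^*_\varepsilon$ for all $\varepsilon\in w$, and $\sup\{\beta^*_\zeta:\zeta<\kappa,\beta^*_\zeta<\beta^*_\varepsilon\}<\beta^\alpha_\varepsilon<\beta^*_\varepsilon$ for all $\varepsilon\in\kappa\setminus w$, satisfies $B\neq\emptyset$ mod $D$; (c) if $\beta'_\varepsilon<\beta^*_\varepsilon$ for $\varepsilon\in\kappa\setminus w$, then $\{\alpha\in B:\beta'_\varepsilon<\beta^\alpha_\varepsilon$ for all $\varepsilon\in\kappa\setminus w\}\neq\emptyset$ mod $D$.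
   Context: For $Y\subseteq\theta$, "$Y\neq\emptyset$ mod $D$" means $\theta\setminus Y\notin D$. A filter is $\sigma$-complete if it is closed under intersections of fewer than $\sigma$ members. *)

theory Defs
  imports Main
begin

text \<open>Ordinals are represented as elements of an arbitrary well-ordered type 'o;
  the ordinal x is identified with the set of its predecessors.\<close>

definition below :: "'o::wellorder \<Rightarrow> 'o set" where
  "below x = {y. y < x}"

definition cofinal_in :: "'o::wellorder set \<Rightarrow> 'o \<Rightarrow> bool" where
  "cofinal_in A x \<longleftrightarrow> A \<subseteq> below x \<and> (\<forall>y<x. \<exists>a\<in>A. y \<le> a)"

definition cof :: "'o::wellorder \<Rightarrow> 'o" where
  "cof x = (LEAST y. \<exists>A. cofinal_in A x \<and> (card_of A, card_of (below y)) \<in> ordIso)"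

definition osup :: "'o::wellorder set \<Rightarrow> 'o" where
  "osup S = (LEAST y. \<forall>z\<in>S. z \<le> y)"

text \<open>Y is nonempty modulo the filter D on theta (= below t).\<close>
definition pos_mod :: "'o::wellorder set set \<Rightarrow> 'o \<Rightarrow> 'o set \<Rightarrow> bool" where
  "pos_mod D t Y \<longleftrightarrow> below t - Y \<notin> D"

definition complete_filter :: "'o::wellorder set set \<Rightarrow> 'o \<Rightarrow> 'o \<Rightarrow> bool" where
  "complete_filter D t s \<longleftrightarrow>
     (\<forall>A\<in>D. A \<subseteq> below t) \<and> below t \<in> D \<and> {} \<notin> D \<and>
     (\<forall>A B. A \<in> D \<longrightarrow> A \<subseteq> B \<longrightarrow> B \<subseteq> below t \<longrightarrow> B \<in> D) \<and>
     (\<forall>F. F \<subseteq> D \<longrightarrow> F \<noteq> {} \<longrightarrow> (card_of F, card_of (below s)) \<in> ordLess \<longrightarrow> \<Inter>F \<in> D)"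

definition is_cardinal :: "'o::wellorder \<Rightarrow> bool" where
  "is_cardinal k \<longleftrightarrow> (\<forall>y<k. (card_of (below y), card_of (below k)) \<in> ordLess)"

end

theory Submission
  imports Defs
begin

text \<open>
  Write \<beta> \<alpha> \<epsilon> for the given ordinals and \<beta>* \<epsilon> for the sequence to be found.
  For infinite \<kappa> the proof is a closure argument. Let \<lambda> < \<sigma> be the least ordinal with more
  than \<kappa> predecessors, so that every subset of \<lambda> of size at most \<kappa> is bounded in \<lambda>. In \<lambda>
  steps, close a common bound of all \<beta> \<alpha> \<epsilon> under the following operations, applied to every
  c : \<kappa> \<rightarrow> \<Gamma> and w \<subseteq> \<kappa>: add the suprema sup {c \<zeta> : c \<zeta> < c \<epsilon>}, a cofinal subset of c \<epsilon> of size
  cf (c \<epsilon>) whenever cf (c \<epsilon>) < \<sigma>, and the values of a counterexample to (c) for (c, w) if there is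
  one. Since |\<alpha>|^\<kappa> < \<sigma> for \<alpha> < \<sigma>, the resulting set \<Gamma> has fewer than \<sigma> elements. Code each
  \<alpha> \<in> X by \<epsilon> \<mapsto> (min {\<gamma> \<in> \<Gamma>. \<beta> \<alpha> \<epsilon> \<le> \<gamma>}, [\<beta> \<alpha> \<epsilon> \<in> \<Gamma>]). There are fewer than \<sigma> codes, so
  by \<sigma>-completeness the class P of some code (c, w) is positive, and (c, w) is the required
  pattern: no element of \<Gamma> lies in [\<beta> \<alpha> \<epsilon>, c \<epsilon>) for \<alpha> \<in> P, so the closure of \<Gamma> rules out
  cf (c \<epsilon>) < \<sigma>, puts the suprema below \<beta> \<alpha> \<epsilon>, and rules out a counterexample to (c).
  Finally (c) makes {\<beta> \<alpha> \<epsilon> : \<alpha> \<in> B} cofinal in \<beta>* \<epsilon>, whence cf (\<beta>* \<epsilon>) \<le> \<theta>.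

  For finite \<kappa> (where \<sigma> may be \<omega>) choose instead, one coordinate at a time, the least bounds
  b \<epsilon> that keep the set positive; w consists of the \<epsilon> for which b \<epsilon> is a successor, and \<beta>* \<epsilon>
  is the predecessor of b \<epsilon> for \<epsilon> \<in> w and b \<epsilon> itself otherwise.
\<close>

unbundle cardinal_syntax

section \<open>Cardinalities of sets of ordinals\<close>

definition le_rel :: "'o::wellorder rel" where
  "le_rel = {(x, y). x \<le> y}"

lemma Well_order_le_rel: "Well_order (le_rel :: 'o::wellorder rel)"
proof -
  have "Field (le_rel :: 'o rel) = UNIV" "(le_rel :: 'o rel) - Id = {(x, y). x < y}"
    unfolding le_rel_def Field_def by auto
  moreover have "linear_order_on UNIV (le_rel :: 'o rel)"
    unfolding linear_order_on_def partial_order_on_def preorder_on_def refl_on_def trans_on_def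
      antisym_on_def total_on_def le_rel_def by auto
  ultimately show ?thesis
    unfolding well_order_on_def using wf by simp
qed

lemma subset_below_card_eq_below:
  fixes t :: "'o::wellorder"
  assumes "Y \<subseteq> below t"
  shows "\<exists>y\<le>t. |Y| =o |below y|"
proof -
  let ?R = "\<lambda>A. Restr (le_rel :: 'o rel) A"
  have Field_R: "Field (?R A) = A" for A unfolding le_rel_def Field_def by auto
  have eq_below: "|Y| =o |below y|" if "|Y| =o ?R (below y)" for y
    using card_of_cong[OF that] unfolding Field_card_of Field_R .
  have WR: "Well_order (?R (below t))" using Well_order_le_rel Well_order_Restr by blast
  have "|Field (?R (below t))| \<le>o ?R (below t)" using card_of_least WR by blast
  then have "|below t| \<le>o ?R (below t)" by (simp only: Field_R)
  then have le: "|Y| \<le>o ?R (below t)" using assms card_of_mono1 ordLeq_transitive by blast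
  show ?thesis
  proof (cases "|Y| =o ?R (below t)")
    case True
    then show ?thesis using eq_below by blast
  next
    case False
    with le have "|Y| <o ?R (below t)" using ordLeq_iff_ordLess_or_ordIso by blast
    then obtain a where a: "a \<in> below t" "|Y| =o Restr (?R (below t)) (underS (?R (below t)) a)"
      using ordLess_iff_ordIso_Restr[OF WR card_of_Well_order] Field_R by blast
    have "Restr (?R (below t)) (underS (?R (below t)) a) = ?R (below a)"
      using a(1) unfolding underS_def le_rel_def below_def by auto
    with a(2) have "|Y| =o |below a|" using eq_below by simp
    then show ?thesis using a(1) by (intro exI[of _ a]) (auto simp: below_def)
  qed
qed

lemma card_le_below_imp_eq_below:
  fixes t :: "'o::wellorder" and A :: "'a set"
  assumes "|A| \<le>o |below t|"
  shows "\<exists>y\<le>t. |A| =o |below y|"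
proof -
  obtain f where f: "inj_on f A" "f ` A \<subseteq> below t"
    using assms unfolding card_of_ordLeq[symmetric] by blast
  obtain y where "y \<le> t" "|f ` A| =o |below y|" using subset_below_card_eq_below[OF f(2)] by blast
  moreover have "|A| =o |f ` A|" using f(1) card_of_ordIsoI inj_on_imp_bij_betw by blast
  ultimately show ?thesis using ordIso_transitive by blast
qed

lemma card_of_below_mono: "(y::'o::wellorder) \<le> x \<Longrightarrow> |below y| \<le>o |below x|"
  by (rule card_of_mono1) (auto simp: below_def)

lemma card_of_Times_ordLess_infinite:
  assumes C: "infinite C" and A: "|A| <o |C|" and B: "|B| <o |C|"
  shows "|A \<times> B| <o |C|"
proof (cases "finite (A \<times> B)")
  case True
  then show ?thesis
    using finite_ordLess_infinite[OF card_of_Well_order card_of_Well_order] C by (simp add: Field_card_of)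
next
  case False
  then have ne: "A \<noteq> {}" "B \<noteq> {}" by auto
  consider "|A| \<le>o |B|" | "|B| \<le>o |A|"
    using ordLeq_total[OF card_of_Well_order card_of_Well_order] by blast
  then show ?thesis
  proof cases
    case 1
    with False have "infinite B" using card_of_ordLeq_finite by auto
    then have "|B \<times> A| =o |B|" using card_of_Times_infinite[OF _ ne(1) 1] by simp
    then show ?thesis using card_of_Times_commute B ordIso_transitive ordIso_ordLess_trans by blast
  next
    case 2
    with False have "infinite A" using card_of_ordLeq_finite by auto
    then have "|A \<times> B| =o |A|" using card_of_Times_infinite[OF _ ne(2) 2] by simp
    then show ?thesis using A ordIso_ordLess_trans by blast
  qed
qed

lemma cof_witness: "\<exists>A. cofinal_in A (c::'o::wellorder) \<and> |A| =o |below (cof c)|"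
proof -
  have "cofinal_in (below c) c \<and> |below c| =o |below c|"
    by (auto simp: cofinal_in_def below_def intro: card_of_refl)
  then show ?thesis unfolding cof_def
    by (rule LeastI[where P="\<lambda>y. \<exists>A. cofinal_in A c \<and> |A| =o |below y|", OF exI])
qed

lemma cof_least:
  assumes "cofinal_in A (c::'o::wellorder)" "|A| =o |below y|"
  shows "cof c \<le> y"
  unfolding cof_def using assms by (intro Least_le) blast

lemma cof_le_if_cofinal_card_le:
  assumes "cofinal_in A (c::'o::wellorder)" "|A| \<le>o |below t|"
  shows "cof c \<le> t"
proof -
  obtain y where "y \<le> t" "|A| =o |below y|" using card_le_below_imp_eq_below[OF assms(2)] by blast
  then show ?thesis using cof_least[OF assms(1)] by fastforce
qed

lemma osup_less_if_card_less:
  fixes c :: "'o::wellorder"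
  assumes "s \<le> cof c" and T: "T \<subseteq> below c" and card: "|T| <o |below s|"
  shows "osup T < c"
proof -
  have "\<not> cofinal_in T c"
  proof
    assume "cofinal_in T c"
    obtain y where y: "y \<le> c" "|T| =o |below y|"
      using card_le_below_imp_eq_below[OF card_of_mono1[OF T]] by blast
    have "cof c \<le> y" using \<open>cofinal_in T c\<close> y(2) by (rule cof_least)
    with assms(1) have "|below s| \<le>o |below y|" using card_of_below_mono by (meson order_trans)
    then have "|below s| \<le>o |T|" using ordLeq_ordIso_trans ordIso_symmetric[OF y(2)] by blast
    then show False using card not_ordLess_ordLeq by blast
  qed
  then obtain y where y: "y < c" "\<forall>a\<in>T. a < y"
    using T unfolding cofinal_in_def by (auto simp: not_le)
  then have "osup T \<le> y" unfolding osup_def by (intro Least_le) (auto simp: less_imp_le)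
  with y(1) show ?thesis by simp
qed

lemma Least_above_in:
  fixes G :: "'o::wellorder set"
  assumes "b \<in> G" "x \<le> b"
  shows "(LEAST g. g \<in> G \<and> x \<le> g) \<in> G" "x \<le> (LEAST g. g \<in> G \<and> x \<le> g)"
    "\<forall>g\<in>G. g < (LEAST g. g \<in> G \<and> x \<le> g) \<longrightarrow> g < x"
    "x \<in> G \<longleftrightarrow> (LEAST g. g \<in> G \<and> x \<le> g) = x"
proof -
  have in_G: "(LEAST g. g \<in> G \<and> x \<le> g) \<in> G \<and> x \<le> (LEAST g. g \<in> G \<and> x \<le> g)"
    using assms by (intro LeastI) blast
  then show "(LEAST g. g \<in> G \<and> x \<le> g) \<in> G" "x \<le> (LEAST g. g \<in> G \<and> x \<le> g)" by simp_all
  show least: "\<forall>g\<in>G. g < (LEAST g. g \<in> G \<and> x \<le> g) \<longrightarrow> g < x"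
    using not_less_Least[of _ "\<lambda>g. g \<in> G \<and> x \<le> g"] by (auto simp: not_le)
  show "x \<in> G \<longleftrightarrow> (LEAST g. g \<in> G \<and> x \<le> g) = x"
    using least in_G by (metis order.order_iff_strict less_irrefl)
qed

section \<open>Regular ordinals\<close>

context
  fixes s :: "'o::wellorder"
  assumes regular: "cof s = s"
begin

lemma regular_card_below_less:
  assumes "y < s" shows "|below y| <o |below s|"
proof (rule ccontr)
  assume "\<not> |below y| <o |below s|"
  then have "|below s| \<le>o |below y|"
    using ordLess_or_ordLeq[OF card_of_Well_order card_of_Well_order] by blast
  with card_of_below_mono[of y s] assms have "|below s| =o |below y|"
    by (simp add: ordIso_iff_ordLeq)
  then have "cof s \<le> y" by (intro cof_least[of "below s"]) (auto simp: cofinal_in_def below_def)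
  with regular assms show False by simp
qed

lemma regular_bounded:
  assumes T: "T \<subseteq> below s" and card: "|T| <o |below s|"
  shows "\<exists>y<s. \<forall>a\<in>T. a < y"
proof (rule ccontr)
  assume unbounded: "\<not> (\<exists>y<s. \<forall>a\<in>T. a < y)"
  then have "cofinal_in T s" using T unfolding cofinal_in_def by (meson leI)
  obtain y where y: "y \<le> s" "|T| =o |below y|" using subset_below_card_eq_below[OF T] by blast
  have "cof s \<le> y" using \<open>cofinal_in T s\<close> y(2) by (rule cof_least)
  moreover have "y \<noteq> s" using y(2) not_ordLess_ordIso[OF card] by auto
  ultimately show False using regular y(1) by simp
qed

lemma regular_card_le_below:
  assumes "|A| <o |below s|"
  shows "\<exists>a<s. |A| \<le>o |below a|"
proof -
  obtain y where y: "y \<le> s" "|A| =o |below y|"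
    using card_le_below_imp_eq_below[OF ordLess_imp_ordLeq[OF assms]] by blast
  moreover have "y \<noteq> s" using y(2) not_ordLess_ordIso[OF assms] by auto
  moreover have "|A| \<le>o |below y|" using y(2) ordIso_iff_ordLeq by blast
  ultimately show ?thesis by (auto simp: order.order_iff_strict)
qed

lemma regular_card_UN_less:
  fixes I :: "'i set" and A :: "'i \<Rightarrow> 'a set"
  assumes inf: "infinite (below s)" and I: "|I| <o |below s|"
    and A: "\<forall>i\<in>I. |A i| <o |below s|"
  shows "|\<Union>i\<in>I. A i| <o |below s|"
proof -
  have "\<forall>i\<in>I. \<exists>a. a < s \<and> |A i| \<le>o |below a|" using A regular_card_le_below by blast
  then have "\<exists>a. \<forall>i\<in>I. a i < s \<and> |A i| \<le>o |below (a i)|" by (rule bchoice)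
  then obtain a where a: "\<forall>i\<in>I. a i < s \<and> |A i| \<le>o |below (a i)|" by blast
  have "|a ` I| <o |below s|" using card_of_image I by (rule ordLeq_ordLess_trans)
  moreover have "a ` I \<subseteq> below s" using a by (auto simp: below_def)
  ultimately obtain y where y: "y < s" "\<forall>i\<in>I. a i < y"
    using regular_bounded[of "a ` I"] by auto
  have "\<forall>i\<in>I. |A i| \<le>o |below y|"
  proof
    fix i assume "i \<in> I"
    with a y(2) have "|A i| \<le>o |below (a i)|" "|below (a i)| \<le>o |below y|"
      by (auto simp: card_of_below_mono less_imp_le)
    then show "|A i| \<le>o |below y|" by (rule ordLeq_transitive)
  qed
  then have "\<forall>i\<in>I. \<exists>f. inj_on f (A i) \<and> f ` A i \<subseteq> below y"
    by (simp add: card_of_ordLeq[symmetric])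
  then have "\<exists>f. \<forall>i\<in>I. inj_on (f i) (A i) \<and> f i ` A i \<subseteq> below y" by (rule bchoice)
  then obtain f where f: "\<forall>i\<in>I. inj_on (f i) (A i) \<and> f i ` A i \<subseteq> below y" by blast
  have "inj_on (\<lambda>(i, x). (i, f i x)) (SIGMA i:I. A i)"
    using f unfolding inj_on_def by auto
  moreover have "(\<lambda>(i, x). (i, f i x)) ` (SIGMA i:I. A i) \<subseteq> I \<times> below y"
    using f by auto
  ultimately have "|SIGMA i:I. A i| \<le>o |I \<times> below y|"
    unfolding card_of_ordLeq[symmetric] by blast
  then have "|\<Union>i\<in>I. A i| \<le>o |I \<times> below y|"
    by (rule ordLeq_transitive[OF card_of_UNION_Sigma])
  then show ?thesis
    using card_of_Times_ordLess_infinite[OF inf I regular_card_below_less[OF y(1)]]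
    by (rule ordLeq_ordLess_trans)
qed

lemma regular_infinite:
  assumes "x < y" "y < s"
  shows "infinite (below s)"
proof
  assume fin: "finite (below s)"
  have ne: "below s \<noteq> {}" using assms by (auto simp: below_def)
  define m where "m = Max (below s)"
  have m: "m < s" "\<forall>y<s. y \<le> m"
    using Max_in[OF fin ne] Max_ge[OF fin] unfolding m_def below_def by auto
  define z0 :: 'o where "z0 = (LEAST x. True)"
  define z1 where "z1 = (LEAST x. z0 < x)"
  have "z0 \<le> x" unfolding z0_def by (simp add: Least_le)
  then have "z0 < m" using assms m(2) by (meson le_less_trans less_le_trans)
  then have z1: "z0 < z1" "z1 \<le> m" unfolding z1_def by (auto intro: LeastI Least_le)
  have "below z1 = {z0}"
    using z1(1) not_less_Least[of _ "\<lambda>x. z0 < x"] Least_le[of "\<lambda>x. True"]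
    unfolding below_def z1_def z0_def by (auto simp: order.order_iff_strict)
  then have "|{m}| =o |below z1|" by (intro card_of_ordIsoI[of "\<lambda>_. z0"]) (simp add: bij_betw_def)
  moreover have "cofinal_in {m} s" using m unfolding cofinal_in_def below_def by auto
  ultimately have "cof s \<le> z1" using cof_least by blast
  with regular z1(2) m(1) show False by simp
qed

end

section \<open>Positive sets modulo a complete filter\<close>

locale sigma_complete_filter =
  fixes D :: "'o::wellorder set set" and t s :: 'o
  assumes complete_filter: "complete_filter D t s"
    and infinite_sigma: "infinite (below s)"
begin

lemma below_in_filter: "below t \<in> D"
  using complete_filter unfolding complete_filter_def by blast

lemma filter_upward: "A \<in> D \<Longrightarrow> A \<subseteq> B \<Longrightarrow> B \<subseteq> below t \<Longrightarrow> B \<in> D"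
  using complete_filter unfolding complete_filter_def by blast

lemma filter_Inter: "F \<subseteq> D \<Longrightarrow> F \<noteq> {} \<Longrightarrow> |F| <o |below s| \<Longrightarrow> \<Inter>F \<in> D"
  using complete_filter unfolding complete_filter_def by blast

lemma pos_mod_mono:
  assumes "A \<subseteq> B" "pos_mod D t A"
  shows "pos_mod D t B"
  using assms filter_upward[of "below t - B" "below t - A"] unfolding pos_mod_def by blast

lemma pos_mod_imp_ex_less:
  assumes "pos_mod D t Y"
  shows "\<exists>a\<in>Y. a < t"
proof (rule ccontr)
  assume "\<not> (\<exists>a\<in>Y. a < t)"
  then have "below t - Y = below t" by (auto simp: below_def)
  with assms below_in_filter show False unfolding pos_mod_def by simp
qed

lemma not_pos_mod_UN:
  fixes I :: "'i set"
  assumes I: "|I| <o |below s|" and null: "\<forall>i\<in>I. \<not> pos_mod D t (A i)"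
  shows "\<not> pos_mod D t (\<Union>i\<in>I. A i)"
proof (cases "I = {}")
  case True
  then show ?thesis using below_in_filter unfolding pos_mod_def by simp
next
  case False
  let ?F = "(\<lambda>i. below t - A i) ` I"
  have "?F \<subseteq> D" using null unfolding pos_mod_def by blast
  moreover have "|?F| <o |below s|" using card_of_image I by (rule ordLeq_ordLess_trans)
  ultimately have "\<Inter>?F \<in> D" using False filter_Inter by blast
  moreover have "\<Inter>?F = below t - (\<Union>i\<in>I. A i)" using False by auto
  ultimately show ?thesis unfolding pos_mod_def by simp
qed

lemma pos_mod_UN_imp_ex:
  fixes I :: "'i set"
  assumes "pos_mod D t (\<Union>i\<in>I. A i)" "|I| <o |below s|"
  shows "\<exists>i\<in>I. pos_mod D t (A i)"
  using not_pos_mod_UN assms by blast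

lemma pos_mod_Diff:
  assumes Y: "pos_mod D t Y" and N: "\<not> pos_mod D t N"
  shows "pos_mod D t (Y - N)"
proof (rule ccontr)
  assume "\<not> pos_mod D t (Y - N)"
  moreover have "|{Y - N, N}| <o |below s|"
    by (rule finite_ordLess_infinite[OF card_of_Well_order card_of_Well_order])
      (simp_all add: Field_card_of infinite_sigma)
  ultimately have "\<not> pos_mod D t (\<Union>A\<in>{Y - N, N}. A)"
    using N not_pos_mod_UN[of "{Y - N, N}" "\<lambda>A. A"] by blast
  moreover have "Y \<subseteq> (\<Union>A\<in>{Y - N, N}. A)" by blast
  ultimately show False using pos_mod_mono Y by blast
qed

end

section \<open>Closing a small set under \<kappa>-ary operations\<close>

lemma small_subset_bounded_below_successor_card:
  fixes k l :: "'o::wellorder"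
  assumes k: "infinite (below k)" and l: "|below k| <o |below l|" "\<forall>y<l. |below y| \<le>o |below k|"
    and A: "A \<subseteq> below l" "|A| \<le>o |below k|"
  shows "\<exists>j<l. \<forall>a\<in>A. a < j"
proof (rule ccontr)
  assume unbounded: "\<not> (\<exists>j<l. \<forall>a\<in>A. a < j)"
  have "below l \<subseteq> (\<Union>a\<in>A. insert a (below a))"
  proof
    fix j assume "j \<in> below l"
    then have "j < l" by (simp add: below_def)
    with unbounded obtain a where a: "a \<in> A" "\<not> a < j" by blast
    then have "j = a \<or> j < a" by auto
    with a(1) show "j \<in> (\<Union>a\<in>A. insert a (below a))" by (auto simp: below_def)
  qed
  moreover have "\<forall>a\<in>A. |insert a (below a)| \<le>o |below k|"
  proof
    fix a assume "a \<in> A"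
    then have "a < l" using A(1) by (auto simp: below_def)
    then have below_a: "|below a| \<le>o |below k|" using l(2) by blast
    have single: "|{a}| \<le>o |below k|"
      by (rule ordLess_imp_ordLeq[OF finite_ordLess_infinite[OF card_of_Well_order card_of_Well_order]])
        (simp_all add: Field_card_of k)
    have "|{a} \<union> below a| \<le>o |below k|"
      by (rule card_of_Un_ordLeq_infinite_Field[OF _ single below_a card_of_Card_order])
        (simp add: Field_card_of k)
    then show "|insert a (below a)| \<le>o |below k|" by simp
  qed
  then have "|\<Union>a\<in>A. insert a (below a)| \<le>o |below k|"
    by (rule card_of_UNION_ordLeq_infinite[OF k A(2)])
  ultimately have "|below l| \<le>o |below k|" by (rule ordLeq_transitive[OF card_of_mono1])
  then show False using l(1) not_ordLess_ordLeq by blast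
qed

text \<open>An argument e of an operation W encodes a map \<kappa> \<rightarrow> \<Gamma> (first components) together
  with a subset of \<kappa> (second components); like the members of \<^const>\<open>Func\<close>, it is
  \<^const>\<open>undefined\<close> outside \<kappa>.\<close>

inductive closure_stage :: "'o::wellorder \<Rightarrow> 'o \<Rightarrow> (('o \<Rightarrow> 'o \<times> bool) \<Rightarrow> 'o set) \<Rightarrow> 'o \<Rightarrow> 'o \<Rightarrow> bool"
  for k b W where
  base: "closure_stage k b W i b"
| step: "(\<forall>x\<in>below k. \<exists>j<i. closure_stage k b W j (fst (e x))) \<Longrightarrow>
    (\<forall>x. x \<notin> below k \<longrightarrow> e x = undefined) \<Longrightarrow> y \<in> W e \<Longrightarrow> closure_stage k b W i y"

lemma closure_stage_subset:
  "{y. closure_stage k b W i y} \<subseteq>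
    insert b (\<Union>e\<in>Func (below k) ((\<Union>j\<in>below i. {x. closure_stage k b W j x}) \<times> UNIV). W e)"
proof
  fix y assume "y \<in> {y. closure_stage k b W i y}"
  then have "closure_stage k b W i y" by simp
  then show "y \<in> insert b (\<Union>e\<in>Func (below k) ((\<Union>j\<in>below i. {x. closure_stage k b W j x}) \<times> UNIV). W e)"
  proof cases
    case base
    then show ?thesis by simp
  next
    case (step e)
    have "e \<in> Func (below k) ((\<Union>j\<in>below i. {x. closure_stage k b W j x}) \<times> UNIV)"
      unfolding Func_def
    proof (intro CollectI conjI allI impI ballI)
      fix x assume "x \<in> below k"
      with step(1) obtain j where "j < i" "closure_stage k b W j (fst (e x))" by blast
      then show "e x \<in> (\<Union>j\<in>below i. {x. closure_stage k b W j x}) \<times> UNIV"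
        by (auto simp: below_def mem_Times_iff)
    next
      fix x assume "x \<notin> below k"
      with step(2) show "e x = undefined" by blast
    qed
    with step(3) show ?thesis by blast
  qed
qed

lemma closure_stage_UN_closed:
  fixes k l :: "'o::wellorder"
  assumes bounded: "\<And>A. A \<subseteq> below l \<Longrightarrow> |A| \<le>o |below k| \<Longrightarrow> \<exists>j<l. \<forall>a\<in>A. a < j"
    and e: "e \<in> Func (below k) ((\<Union>i\<in>below l. {x. closure_stage k b W i x}) \<times> (UNIV::bool set))"
  shows "W e \<subseteq> (\<Union>i\<in>below l. {x. closure_stage k b W i x})"
proof -
  have "fst (e x) \<in> (\<Union>i\<in>below l. {x. closure_stage k b W i x})" if "x \<in> below k" for x
  proof -
    from e that have "e x \<in> (\<Union>i\<in>below l. {x. closure_stage k b W i x}) \<times> UNIV"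
      unfolding Func_def by blast
    then show ?thesis by (simp add: mem_Times_iff)
  qed
  then have "\<forall>x\<in>below k. \<exists>i. i < l \<and> closure_stage k b W i (fst (e x))"
    unfolding below_def by blast
  then have "\<exists>I. \<forall>x\<in>below k. I x < l \<and> closure_stage k b W (I x) (fst (e x))" by (rule bchoice)
  then obtain I where I: "\<forall>x\<in>below k. I x < l \<and> closure_stage k b W (I x) (fst (e x))"
    by blast
  have "I ` below k \<subseteq> below l" using I by (auto simp: below_def)
  moreover have "|I ` below k| \<le>o |below k|" by (rule card_of_image)
  ultimately have "\<exists>j<l. \<forall>a\<in>I ` below k. a < j" by (rule bounded)
  then obtain j where j: "j < l" "\<forall>x\<in>below k. I x < j" by blast
  have "closure_stage k b W j y" if "y \<in> W e" for y
  proof (rule closure_stage.step[where e = e and W = W, OF _ _ that])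
    show "\<forall>x\<in>below k. \<exists>i<j. closure_stage k b W i (fst (e x))" using I j(2) by blast
    show "\<forall>x. x \<notin> below k \<longrightarrow> e x = undefined" using e unfolding Func_def by blast
  qed
  then show ?thesis using j(1) by (auto simp: below_def)
qed

locale regular_above_cardSuc =
  fixes k s :: "'o::wellorder"
  assumes s_regular: "cof s = s"
    and cardSuc_k_less_s: "cardSuc |below k| <o |below s|"
begin

lemma card_k_less_cardSuc_k: "|below k| <o cardSuc |below k|"
  by (rule cardSuc_greater[OF card_of_Card_order])

lemma card_k_less_s: "|below k| <o |below s|"
  using card_k_less_cardSuc_k cardSuc_k_less_s by (rule ordLess_transitive)

lemma card_Field_cardSuc_k: "|Field (cardSuc (card_of (below k)))| =o cardSuc |below k|"
  by (rule card_of_Field_ordIso[OF cardSuc_Card_order[OF card_of_Card_order]])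

lemma infinite_s: "infinite (below s)"
proof -
  let ?C = "Field (cardSuc (card_of (below k)))"
  note C = card_Field_cardSuc_k
  have "?C \<noteq> {}"
  proof
    assume "?C = {}"
    then have "|?C| \<le>o |below k|" by (simp add: card_of_empty)
    then show False
      using ordLess_ordIso_trans[OF card_k_less_cardSuc_k ordIso_symmetric[OF C]] not_ordLess_ordLeq
      by blast
  qed
  then obtain c where "c \<in> ?C" by blast
  then have "|{c}| \<le>o |?C|" by (intro card_of_singl_ordLeq) blast
  then have c: "|{c}| <o |below s|"
    using ordLeq_ordLess_trans[OF _ ordIso_ordLess_trans[OF C cardSuc_k_less_s]] by blast
  have "\<not> |below s| \<le>o |{c}|" using c not_ordLess_ordLeq by blast
  then have "\<not> inj_on (\<lambda>_. c) (below s)"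
    unfolding card_of_ordLeq[symmetric] by blast
  then obtain x y where xy: "x \<in> below s" "y \<in> below s" "x \<noteq> y"
    unfolding inj_on_def by blast
  show ?thesis
  proof (rule regular_infinite[OF s_regular])
    show "min x y < max x y" "max x y < s" using xy by (auto simp: below_def min_def max_def)
  qed
qed

lemma card_Func_less:
  assumes pow: "\<forall>a<s. |below a| ^c |below k| <o |below s|" and G: "|G| <o |below s|"
  shows "|Func (below k) (G \<times> (UNIV::bool set))| <o |below s|"
proof -
  have "|UNIV :: bool set| <o |below s|"
    by (rule finite_ordLess_infinite[OF card_of_Well_order card_of_Well_order])
      (simp_all add: Field_card_of infinite_s)
  then have "|G \<times> (UNIV::bool set)| <o |below s|"
    by (rule card_of_Times_ordLess_infinite[OF infinite_s G])
  then obtain a where a: "a < s" "|G \<times> (UNIV::bool set)| \<le>o |below a|"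
    using regular_card_le_below[OF s_regular] by blast
  have "|G \<times> (UNIV::bool set)| ^c |below k| \<le>o |below a| ^c |below k|"
    by (rule cexp_mono1[OF a(2) card_of_Card_order])
  then have "|G \<times> (UNIV::bool set)| ^c |below k| <o |below s|"
    using pow a(1) ordLeq_ordLess_trans by blast
  then show ?thesis unfolding cexp_def Field_card_of .
qed

lemma exists_successor_card_below_s:
  obtains l where "l < s" "|below k| <o |below l|" "\<forall>y<l. |below y| \<le>o |below k|"
proof -
  have "|Field (cardSuc (card_of (below k)))| <o |below s|"
    by (rule ordIso_ordLess_trans[OF card_Field_cardSuc_k cardSuc_k_less_s])
  then obtain a where a: "a < s" "|Field (cardSuc (card_of (below k)))| \<le>o |below a|"
    using regular_card_le_below[OF s_regular] by blast
  have "|below k| <o |Field (cardSuc (card_of (below k)))|"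
    by (rule ordLess_ordIso_trans[OF card_k_less_cardSuc_k ordIso_symmetric[OF card_Field_cardSuc_k]])
  from this a(2) have k_less_a: "|below k| <o |below a|" by (rule ordLess_ordLeq_trans)
  define larger where "larger x \<longleftrightarrow> |below k| <o |below x|" for x :: 'o
  define l where "l = Least larger"
  have "|below k| <o |below l|" using LeastI[of larger a] k_less_a unfolding l_def larger_def by blast
  moreover have "l \<le> a" using Least_le[of larger a] k_less_a unfolding l_def larger_def by blast
  moreover have "|below y| \<le>o |below k|" if "y < l" for y
  proof -
    have "\<not> |below k| <o |below y|" using not_less_Least[of y larger] that unfolding l_def larger_def by blast
    then show ?thesis using ordLess_or_ordLeq[OF card_of_Well_order card_of_Well_order] by blast
  qed
  ultimately show ?thesis using a(1) that[of l] by auto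
qed

lemma card_closure_stage_less:
  fixes W :: "('o \<Rightarrow> 'o \<times> bool) \<Rightarrow> 'o set" and b :: 'o
  assumes pow: "\<forall>a<s. |below a| ^c |below k| <o |below s|" and W: "\<forall>e. |W e| <o |below s|"
  shows "i < s \<Longrightarrow> |{x. closure_stage k b W i x}| <o |below s|"
proof (induction i rule: less_induct)
  case (less i)
  let ?earlier = "\<Union>j\<in>below i. {x. closure_stage k b W j x}"
  let ?F = "Func (below k) (?earlier \<times> (UNIV::bool set))"
  have "\<forall>j\<in>below i. |{x. closure_stage k b W j x}| <o |below s|"
  proof
    fix j assume "j \<in> below i"
    then have "j < i" "j < s" using less.prems by (auto simp: below_def)
    then show "|{x. closure_stage k b W j x}| <o |below s|" by (rule less.IH)
  qed
  then have "|?earlier| <o |below s|"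
    by (rule regular_card_UN_less[OF s_regular infinite_s regular_card_below_less[OF s_regular less.prems]])
  then have "|?F| <o |below s|" by (rule card_Func_less[OF pow])
  moreover have "\<forall>e\<in>?F. |W e| <o |below s|" using W by blast
  ultimately have "|\<Union>e\<in>?F. W e| <o |below s|" by (rule regular_card_UN_less[OF s_regular infinite_s])
  moreover have "|{b}| <o |below s|"
    by (rule finite_ordLess_infinite[OF card_of_Well_order card_of_Well_order])
      (simp_all add: Field_card_of infinite_s)
  ultimately have "|{b} \<union> (\<Union>e\<in>?F. W e)| <o |below s|"
    by (intro card_of_Un_ordLess_infinite[OF infinite_s])
  then have "|insert b (\<Union>e\<in>?F. W e)| <o |below s|" by simp
  then show ?case by (rule ordLeq_ordLess_trans[OF card_of_mono1[OF closure_stage_subset]])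
qed

lemma exists_small_closed_set:
  fixes W :: "('o \<Rightarrow> 'o \<times> bool) \<Rightarrow> 'o set" and b :: 'o
  assumes pow: "\<forall>a<s. |below a| ^c |below k| <o |below s|" and k: "infinite (below k)"
    and W: "\<forall>e. |W e| <o |below s|"
  shows "\<exists>G. |G| <o |below s| \<and> b \<in> G \<and> (\<forall>e\<in>Func (below k) (G \<times> (UNIV::bool set)). W e \<subseteq> G)"
proof -
  obtain l where l: "l < s" "|below k| <o |below l|" "\<forall>y<l. |below y| \<le>o |below k|"
    by (rule exists_successor_card_below_s)
  note bounded = small_subset_bounded_below_successor_card[OF k l(2,3)]
  define G where "G = (\<Union>i\<in>below l. {x. closure_stage k b W i x})"
  have "\<forall>i\<in>below l. |{x. closure_stage k b W i x}| <o |below s|"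
  proof
    fix i assume "i \<in> below l"
    with l(1) have "i < s" by (simp add: below_def)
    then show "|{x. closure_stage k b W i x}| <o |below s|" by (rule card_closure_stage_less[OF pow W])
  qed
  then have "|G| <o |below s|" unfolding G_def
    by (rule regular_card_UN_less[OF s_regular infinite_s regular_card_below_less[OF s_regular l(1)]])
  moreover have "b \<in> G"
  proof -
    obtain j where "j < l" using bounded[OF empty_subsetI card_of_empty] by blast
    then show ?thesis using closure_stage.base[of k b W j] unfolding G_def by (auto simp: below_def)
  qed
  moreover have "\<forall>e\<in>Func (below k) (G \<times> (UNIV::bool set)). W e \<subseteq> G"
    unfolding G_def using closure_stage_UN_closed[OF bounded] by blast
  ultimately show ?thesis by blast
qed

end

definition pattern_set ::
    "'o::wellorder set \<Rightarrow> ('o \<Rightarrow> 'o \<Rightarrow> 'o) \<Rightarrow> 'o \<Rightarrow> ('o \<Rightarrow> 'o) \<Rightarrow> 'o set \<Rightarrow> 'o set" where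
  "pattern_set X beta k bs w = {a\<in>X. (\<forall>e\<in>w. beta a e = bs e) \<and>
     (\<forall>e\<in>below k - w. osup {bs z | z. z < k \<and> bs z < bs e} < beta a e \<and> beta a e < bs e)}"

definition pos_cofinal :: "'o::wellorder set set \<Rightarrow> 'o \<Rightarrow> ('o \<Rightarrow> 'o \<Rightarrow> 'o) \<Rightarrow> 'o \<Rightarrow> 'o set \<Rightarrow>
    ('o \<Rightarrow> 'o) \<Rightarrow> 'o set \<Rightarrow> bool" where
  "pos_cofinal D t beta k w bs B \<longleftrightarrow>
     (\<forall>b'. (\<forall>e\<in>below k - w. b' e < bs e) \<longrightarrow> pos_mod D t {a\<in>B. \<forall>e\<in>below k - w. b' e < beta a e})"

text \<open>For the candidate (\<beta>*, w) = (bs, w), \<^const>\<open>pattern_set\<close> is the set B of clause (b)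
  and \<^const>\<open>pos_cofinal\<close> is clause (c).\<close>

definition good_pattern :: "'o::wellorder \<Rightarrow> 'o \<Rightarrow> 'o \<Rightarrow> 'o set set \<Rightarrow> ('o \<Rightarrow> 'o \<Rightarrow> 'o) \<Rightarrow> 'o set \<Rightarrow>
    ('o \<Rightarrow> 'o) \<Rightarrow> 'o set \<Rightarrow> bool" where
  "good_pattern t k s D beta X bs w \<longleftrightarrow> w \<subseteq> below k \<and>
     (\<forall>e\<in>below k - w. s \<le> cof (bs e) \<and> cof (bs e) \<le> t) \<and>
     pos_mod D t (pattern_set X beta k bs w) \<and>
     pos_cofinal D t beta k w bs (pattern_set X beta k bs w)"

locale pattern_setting = regular_above_cardSuc k s for k s :: "'o::wellorder" +
  fixes t :: 'o and D :: "'o set set" and beta :: "'o \<Rightarrow> 'o \<Rightarrow> 'o" and X :: "'o set"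
  assumes filter: "complete_filter D t s"
    and beta_bounded: "\<exists>b. \<forall>a<t. \<forall>e<k. beta a e < b"
    and X_below: "X \<subseteq> below t"
    and X_pos: "pos_mod D t X"

sublocale pattern_setting \<subseteq> sigma_complete_filter D t s
  using filter infinite_s by unfold_locales

context pattern_setting
begin

lemma card_Diff_k_less: "|below k - w| <o |below s|"
  by (rule ordLeq_ordLess_trans[OF card_of_mono1[OF Diff_subset] card_k_less_s])

lemma osup_lower_values_less:
  assumes "s \<le> cof (bs e)"
  shows "osup {bs z | z. z < k \<and> bs z < bs e} < bs e"
proof (rule osup_less_if_card_less[OF assms])
  show "{bs z | z. z < k \<and> bs z < bs e} \<subseteq> below (bs e)" by (auto simp: below_def)
  have "{bs z | z. z < k \<and> bs z < bs e} \<subseteq> bs ` below k" by (auto simp: below_def)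
  then have "|{bs z | z. z < k \<and> bs z < bs e}| \<le>o |below k|"
    by (rule ordLeq_transitive[OF card_of_mono1 card_of_image])
  then show "|{bs z | z. z < k \<and> bs z < bs e}| <o |below s|"
    by (rule ordLeq_ordLess_trans[OF _ card_k_less_s])
qed

lemma good_pattern_if_pos_cofinal:
  assumes w: "w \<subseteq> below k" and cof_ge: "\<forall>e\<in>below k - w. s \<le> cof (bs e)"
    and cofinal: "pos_cofinal D t beta k w bs (pattern_set X beta k bs w)"
  shows "good_pattern t k s D beta X bs w"
proof -
  let ?B = "pattern_set X beta k bs w"
  define lower_sup where "lower_sup e = osup {bs z | z. z < k \<and> bs z < bs e}" for e
  have sup_less: "\<forall>e\<in>below k - w. lower_sup e < bs e"
    using cof_ge osup_lower_values_less unfolding lower_sup_def by blast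
  have above: "pos_mod D t {a\<in>?B. \<forall>e\<in>below k - w. b' e < beta a e}"
    if "\<forall>e\<in>below k - w. b' e < bs e" for b'
    using cofinal that unfolding pos_cofinal_def by blast
  have "pos_mod D t ?B" using pos_mod_mono[OF _ above[OF sup_less]] by blast
  moreover have "cof (bs e) \<le> t" if e: "e \<in> below k - w" for e
  proof (rule cof_le_if_cofinal_card_le)
    let ?A = "(\<lambda>a. beta a e) ` (?B \<inter> below t)"
    show "|?A| \<le>o |below t|" by (rule ordLeq_transitive[OF card_of_image card_of_mono1]) auto
    show "cofinal_in ?A (bs e)" unfolding cofinal_in_def
    proof (intro conjI allI impI)
      show "?A \<subseteq> below (bs e)" using e by (auto simp: pattern_set_def below_def)
    next
      fix y assume "y < bs e"
      with sup_less have "\<forall>z\<in>below k - w. (lower_sup(e := y)) z < bs z" by simp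
      then obtain a where "a \<in> ?B" "a < t" "(lower_sup(e := y)) e < beta a e"
        using pos_mod_imp_ex_less[OF above] e by blast
      then show "\<exists>g\<in>?A. y \<le> g" by (auto simp: below_def intro: less_imp_le)
    qed
  qed
  ultimately show ?thesis using w cof_ge cofinal unfolding good_pattern_def by blast
qed

subsection \<open>Finite \<kappa>\<close>

lemma exists_least_bounds:
  assumes "finite E" "E \<subseteq> below k" "pos_mod D t Y" "Y \<subseteq> below t"
  shows "\<exists>b. pos_mod D t (Y \<inter> {a. \<forall>e\<in>E. beta a e < b e}) \<and>
      (\<forall>e\<in>E. \<forall>g<b e. \<not> pos_mod D t (Y \<inter> {a. \<forall>e\<in>E. beta a e < b e} \<inter> {a. beta a e < g}))"
  using assms
proof (induction E arbitrary: Y rule: finite_induct)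
  case empty
  then show ?case by simp
next
  case (insert e0 E)
  obtain bnd where bnd: "\<forall>a<t. \<forall>e<k. beta a e < bnd" using beta_bounded by blast
  let ?P = "\<lambda>g. pos_mod D t (Y \<inter> {a. beta a e0 < g})"
  have "e0 < k" using insert.prems(1) by (auto simp: below_def)
  with insert.prems(3) bnd have "Y \<inter> {a. beta a e0 < bnd} = Y" by (auto simp: below_def)
  with insert.prems(2) have "?P bnd" by simp
  define g where "g = (LEAST g. ?P g)"
  have Pg: "?P g" unfolding g_def using \<open>?P bnd\<close> by (rule LeastI)
  have below_g: "\<not> ?P g'" if "g' < g" for g' using that unfolding g_def by (rule not_less_Least)
  let ?Y = "Y \<inter> {a. beta a e0 < g}"
  obtain b where b: "pos_mod D t (?Y \<inter> {a. \<forall>e\<in>E. beta a e < b e})"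
    "\<forall>e\<in>E. \<forall>g<b e. \<not> pos_mod D t (?Y \<inter> {a. \<forall>e\<in>E. beta a e < b e} \<inter> {a. beta a e < g})"
    using insert.IH[of ?Y] insert.prems Pg by auto
  define b' where "b' = b(e0 := g)"
  have Y_eq: "Y \<inter> {a. \<forall>e\<in>insert e0 E. beta a e < b' e} = ?Y \<inter> {a. \<forall>e\<in>E. beta a e < b e}"
    using insert.hyps(2) unfolding b'_def by auto
  show ?case
  proof (intro exI[of _ b'] conjI ballI allI impI)
    show "pos_mod D t (Y \<inter> {a. \<forall>e\<in>insert e0 E. beta a e < b' e})" using Y_eq b(1) by simp
  next
    fix e g' assume e: "e \<in> insert e0 E" and g': "g' < b' e"
    show "\<not> pos_mod D t (Y \<inter> {a. \<forall>e\<in>insert e0 E. beta a e < b' e} \<inter> {a. beta a e < g'})"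
    proof (cases "e = e0")
      case True
      with g' have "\<not> ?P g'" using below_g unfolding b'_def by simp
      moreover have "Y \<inter> {a. \<forall>e\<in>insert e0 E. beta a e < b' e} \<inter> {a. beta a e < g'} \<subseteq> Y \<inter> {a. beta a e0 < g'}"
        using True by auto
      ultimately show ?thesis using pos_mod_mono by blast
    next
      case False
      with e g' have "e \<in> E" "g' < b e" unfolding b'_def by auto
      then show ?thesis unfolding Y_eq using b(2) by blast
    qed
  qed
qed

lemma good_pattern_if_null_below:
  assumes Y: "Y \<subseteq> X" "pos_mod D t Y" and w: "w \<subseteq> below k"
    and on_w: "\<forall>a\<in>Y. \<forall>e\<in>w. beta a e = bs e"
    and off_w: "\<forall>a\<in>Y. \<forall>e\<in>below k - w. beta a e < bs e"
    and null_below: "\<forall>e\<in>below k - w. \<forall>g<bs e. \<not> pos_mod D t {a\<in>Y. beta a e \<le> g}"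
  shows "good_pattern t k s D beta X bs w"
proof -
  have above: "pos_mod D t {a\<in>Y. \<forall>e\<in>below k - w. b' e < beta a e}"
    if b': "\<forall>e\<in>below k - w. b' e < bs e" for b'
  proof -
    have "\<not> pos_mod D t (\<Union>e\<in>below k - w. {a\<in>Y. beta a e \<le> b' e})"
      using null_below b' by (intro not_pos_mod_UN[OF card_Diff_k_less]) blast
    from pos_mod_Diff[OF Y(2) this] show ?thesis by (rule pos_mod_mono[rotated]) (auto simp: not_le)
  qed
  have cof_ge: "\<forall>e\<in>below k - w. s \<le> cof (bs e)"
  proof (intro ballI leI notI)
    fix e assume e: "e \<in> below k - w" and small: "cof (bs e) < s"
    obtain A where A: "cofinal_in A (bs e)" "|A| =o |below (cof (bs e))|" using cof_witness by blast
    have "|A| <o |below s|" using A(2) regular_card_below_less[OF s_regular small] by (rule ordIso_ordLess_trans)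
    moreover have "\<forall>g\<in>A. \<not> pos_mod D t {a\<in>Y. beta a e \<le> g}"
      using A(1) null_below e unfolding cofinal_in_def below_def by blast
    ultimately have "\<not> pos_mod D t (\<Union>g\<in>A. {a\<in>Y. beta a e \<le> g})" by (rule not_pos_mod_UN)
    moreover have "Y \<subseteq> (\<Union>g\<in>A. {a\<in>Y. beta a e \<le> g})"
      using off_w e A(1) unfolding cofinal_in_def by blast
    ultimately show False using pos_mod_mono Y(2) by blast
  qed
  show ?thesis
  proof (rule good_pattern_if_pos_cofinal[OF w cof_ge], unfold pos_cofinal_def, intro allI impI)
    fix b' assume b': "\<forall>e\<in>below k - w. b' e < bs e"
    let ?b = "\<lambda>e. max (b' e) (osup {bs z | z. z < k \<and> bs z < bs e})"
    have "\<forall>e\<in>below k - w. ?b e < bs e" using b' cof_ge osup_lower_values_less by simp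
    then have "pos_mod D t {a\<in>Y. \<forall>e\<in>below k - w. ?b e < beta a e}" by (rule above)
    moreover have "{a\<in>Y. \<forall>e\<in>below k - w. ?b e < beta a e} \<subseteq>
        {a\<in>pattern_set X beta k bs w. \<forall>e\<in>below k - w. b' e < beta a e}"
      using Y(1) on_w off_w by (auto simp: pattern_set_def)
    ultimately show "pos_mod D t {a\<in>pattern_set X beta k bs w. \<forall>e\<in>below k - w. b' e < beta a e}"
      using pos_mod_mono by blast
  qed
qed

lemma good_pattern_finite:
  assumes fin: "finite (below k)"
  shows "\<exists>bs w. good_pattern t k s D beta X bs w"
proof -
  obtain b where b: "pos_mod D t (X \<inter> {a. \<forall>e\<in>below k. beta a e < b e})"
    "\<forall>e\<in>below k. \<forall>g<b e. \<not> pos_mod D t (X \<inter> {a. \<forall>e\<in>below k. beta a e < b e} \<inter> {a. beta a e < g})"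
    using exists_least_bounds[OF fin subset_refl X_pos X_below] by blast
  let ?Z = "X \<inter> {a. \<forall>e\<in>below k. beta a e < b e}"
  define pred where "pred e g \<longleftrightarrow> g < b e \<and> (\<forall>x. g < x \<longrightarrow> b e \<le> x)" for e g
  define w where "w = {e\<in>below k. \<exists>g. pred e g}"
  define bs where "bs e = (if e \<in> w then (SOME g. pred e g) else b e)" for e
  have pred_bs: "pred e (bs e)" if "e \<in> w" for e
    using that someI_ex[of "pred e"] unfolding w_def bs_def by auto
  have w: "w \<subseteq> below k" unfolding w_def by auto
  let ?N = "\<Union>e\<in>w. ?Z \<inter> {a. beta a e < bs e}"
  have "\<forall>e\<in>w. \<not> pos_mod D t (?Z \<inter> {a. beta a e < bs e})"
    using b(2) pred_bs w unfolding pred_def by blast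
  then have "\<not> pos_mod D t ?N"
    by (rule not_pos_mod_UN[OF ordLeq_ordLess_trans[OF card_of_mono1[OF w] card_k_less_s]])
  with b(1) have pos: "pos_mod D t (?Z - ?N)" by (rule pos_mod_Diff)
  show ?thesis
  proof (intro exI, rule good_pattern_if_null_below[OF _ pos w])
    show "?Z - ?N \<subseteq> X" by auto
    show "\<forall>a\<in>?Z - ?N. \<forall>e\<in>w. beta a e = bs e"
    proof (intro ballI)
      fix a e assume a: "a \<in> ?Z - ?N" and e: "e \<in> w"
      with w have "beta a e < b e" "\<not> beta a e < bs e" by auto
      moreover from pred_bs[OF e] \<open>beta a e < b e\<close> have "\<not> bs e < beta a e"
        unfolding pred_def using leD by blast
      ultimately show "beta a e = bs e" by simp
    qed
    show "\<forall>a\<in>?Z - ?N. \<forall>e\<in>below k - w. beta a e < bs e" unfolding bs_def by auto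
    show "\<forall>e\<in>below k - w. \<forall>g<bs e. \<not> pos_mod D t {a\<in>?Z - ?N. beta a e \<le> g}"
    proof (intro ballI allI impI)
      fix e g assume e: "e \<in> below k - w" and g: "g < bs e"
      then have "bs e = b e" "\<not> pred e g" unfolding bs_def w_def by auto
      with g have "g < b e" "\<not> pred e g" by simp_all
      then obtain x where x: "g < x" "x < b e" unfolding pred_def by (auto simp: not_le)
      with e b(2) have "\<not> pos_mod D t (?Z \<inter> {a. beta a e < x})" by blast
      moreover have "{a\<in>?Z - ?N. beta a e \<le> g} \<subseteq> ?Z \<inter> {a. beta a e < x}" using x(1) by auto
      ultimately show "\<not> pos_mod D t {a\<in>?Z - ?N. beta a e \<le> g}" using pos_mod_mono by blast
    qed
  qed
qed

subsection \<open>Infinite \<kappa>\<close>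

definition small_cofinal :: "'o \<Rightarrow> 'o set" where
  "small_cofinal c = (if cof c < s then (SOME A. cofinal_in A c \<and> |A| =o |below (cof c)| ) else {})"

definition counterexample :: "('o \<Rightarrow> 'o) \<Rightarrow> 'o set \<Rightarrow> 'o \<Rightarrow> 'o" where
  "counterexample bs w = (SOME b'. (\<forall>e\<in>below k - w. b' e < bs e) \<and>
     \<not> pos_mod D t {a\<in>pattern_set X beta k bs w. \<forall>e\<in>below k - w. b' e < beta a e})"

definition witnesses :: "('o \<Rightarrow> 'o) \<Rightarrow> 'o set \<Rightarrow> 'o set" where
  "witnesses bs w = (\<Union>e\<in>below k.
     {osup {bs z | z. z < k \<and> bs z < bs e}, counterexample bs w e} \<union> small_cofinal (bs e))"

lemma small_cofinal:
  assumes "cof c < s"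
  shows "cofinal_in (small_cofinal c) c" "|small_cofinal c| =o |below (cof c)|"
  using someI_ex[OF cof_witness[of c]] assms unfolding small_cofinal_def by simp_all

lemma card_small_cofinal_less: "|small_cofinal c| <o |below s|"
proof (cases "cof c < s")
  case True
  show ?thesis
    using small_cofinal(2)[OF True] regular_card_below_less[OF s_regular True] by (rule ordIso_ordLess_trans)
next
  case False
  then show ?thesis unfolding small_cofinal_def
    by (simp add: finite_ordLess_infinite[OF card_of_Well_order card_of_Well_order] Field_card_of infinite_s)
qed

lemma counterexample:
  assumes "\<not> pos_cofinal D t beta k w bs (pattern_set X beta k bs w)"
  shows "(\<forall>e\<in>below k - w. counterexample bs w e < bs e) \<and>
    \<not> pos_mod D t {a\<in>pattern_set X beta k bs w. \<forall>e\<in>below k - w. counterexample bs w e < beta a e}"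
proof -
  let ?cex = "\<lambda>b'. (\<forall>e\<in>below k - w. b' e < bs e) \<and>
     \<not> pos_mod D t {a\<in>pattern_set X beta k bs w. \<forall>e\<in>below k - w. b' e < beta a e}"
  have "\<exists>b'. ?cex b'" using assms unfolding pos_cofinal_def by blast
  then have "?cex (SOME b'. ?cex b')" by (rule someI_ex)
  then show ?thesis unfolding counterexample_def .
qed

lemma card_witnesses_less: "|witnesses bs w| <o |below s|"
  unfolding witnesses_def
proof (rule regular_card_UN_less[OF s_regular infinite_s card_k_less_s], intro ballI)
  fix e
  have "|{osup {bs z | z. z < k \<and> bs z < bs e}, counterexample bs w e}| <o |below s|"
    by (rule finite_ordLess_infinite[OF card_of_Well_order card_of_Well_order])
      (simp_all add: Field_card_of infinite_s)
  then show "|{osup {bs z | z. z < k \<and> bs z < bs e}, counterexample bs w e} \<union> small_cofinal (bs e)|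
      <o |below s|"
    by (rule card_of_Un_ordLess_infinite[OF infinite_s _ card_small_cofinal_less])
qed

lemma good_pattern_if_gap:
  assumes P: "P \<subseteq> X" "pos_mod D t P" and w: "w \<subseteq> below k"
    and closed: "witnesses c w \<subseteq> G"
    and on_w: "\<forall>a\<in>P. \<forall>e\<in>w. beta a e = c e"
    and off_w: "\<forall>a\<in>P. \<forall>e\<in>below k - w. beta a e < c e"
    and gap: "\<forall>a\<in>P. \<forall>e\<in>below k - w. \<forall>g\<in>G. g < c e \<longrightarrow> g < beta a e"
  shows "good_pattern t k s D beta X c w"
proof -
  have sup_in: "osup {c z | z. z < k \<and> c z < c e} \<in> G"
    and cex_in: "counterexample c w e \<in> G"
    and small_in: "small_cofinal (c e) \<subseteq> G" if "e \<in> below k" for e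
    using closed that unfolding witnesses_def by blast+
  obtain a0 where "a0 \<in> P" using pos_mod_imp_ex_less[OF P(2)] by blast
  have cof_ge: "\<forall>e\<in>below k - w. s \<le> cof (c e)"
  proof (intro ballI leI notI)
    fix e assume e: "e \<in> below k - w" and small: "cof (c e) < s"
    with off_w \<open>a0 \<in> P\<close> have "beta a0 e < c e" by blast
    then obtain g where g: "g \<in> small_cofinal (c e)" "beta a0 e \<le> g"
      using small_cofinal(1)[OF small] unfolding cofinal_in_def by blast
    then have "g < c e" using small_cofinal(1)[OF small] unfolding cofinal_in_def below_def by blast
    with gap \<open>a0 \<in> P\<close> e small_in g(1) have "g < beta a0 e" by blast
    with g(2) show False by simp
  qed
  have P_sub: "P \<subseteq> pattern_set X beta k c w"
  proof
    fix a assume a: "a \<in> P"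
    have "osup {c z | z. z < k \<and> c z < c e} < beta a e" if e: "e \<in> below k - w" for e
      using gap a e sup_in[of e] osup_lower_values_less[of c e] cof_ge by blast
    then show "a \<in> pattern_set X beta k c w"
      unfolding pattern_set_def using a P(1) on_w off_w by blast
  qed
  show ?thesis
  proof (rule good_pattern_if_pos_cofinal[OF w cof_ge], rule ccontr)
    assume "\<not> pos_cofinal D t beta k w c (pattern_set X beta k c w)"
    note cex = counterexample[OF this]
    have "P \<subseteq> {a\<in>pattern_set X beta k c w. \<forall>e\<in>below k - w. counterexample c w e < beta a e}"
      using P_sub gap cex cex_in by blast
    then show False using cex pos_mod_mono P(2) by blast
  qed
qed

lemma good_pattern_infinite:
  assumes pow: "\<forall>a<s. |below a| ^c |below k| <o |below s|" and inf: "infinite (below k)"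
  shows "\<exists>bs w. good_pattern t k s D beta X bs w"
proof -
  obtain bnd where bnd: "\<forall>a<t. \<forall>e<k. beta a e < bnd" using beta_bounded by blast
  define W where "W e = witnesses (\<lambda>x. fst (e x)) {x\<in>below k. snd (e x)}" for e :: "'o \<Rightarrow> 'o \<times> bool"
  have "\<forall>e. |W e| <o |below s|" unfolding W_def using card_witnesses_less by blast
  then obtain G where G: "|G| <o |below s|" "bnd \<in> G"
    and closed: "\<forall>e\<in>Func (below k) (G \<times> (UNIV::bool set)). W e \<subseteq> G"
    using exists_small_closed_set[OF pow inf] by blast
  define up where "up a x = (LEAST g. g \<in> G \<and> beta a x \<le> g)" for a x
  have "beta a x \<le> bnd" if "a \<in> X" "x \<in> below k" for a x
    using bnd X_below that by (auto simp: below_def less_imp_le)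
  note up = Least_above_in[OF G(2) this, folded up_def]
  define code where "code a = (\<lambda>x. if x \<in> below k then (up a x, beta a x \<in> G) else undefined)" for a
  let ?F = "Func (below k) (G \<times> (UNIV::bool set))"
  have "code a \<in> ?F" if "a \<in> X" for a using up(1)[OF that] unfolding code_def Func_def by auto
  then have "X \<subseteq> (\<Union>e\<in>?F. {a\<in>X. code a = e})" by blast
  then have "pos_mod D t (\<Union>e\<in>?F. {a\<in>X. code a = e})" using X_pos pos_mod_mono by blast
  then obtain e0 where e0: "e0 \<in> ?F" "pos_mod D t {a\<in>X. code a = e0}"
    using pos_mod_UN_imp_ex card_Func_less[OF pow G(1)] by blast
  define P where "P = {a\<in>X. code a = e0}"
  define c where "c = (\<lambda>x. fst (e0 x))"
  define w where "w = {x\<in>below k. snd (e0 x)}"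
  have code_P: "c x = up a x" "x \<in> w \<longleftrightarrow> beta a x \<in> G" if "a \<in> P" "x \<in> below k" for a x
    using that unfolding P_def c_def w_def code_def by auto
  show ?thesis
  proof (intro exI, rule good_pattern_if_gap)
    show "P \<subseteq> X" "pos_mod D t P" "w \<subseteq> below k" using e0(2) unfolding P_def w_def by auto
    show "witnesses c w \<subseteq> G" using closed e0(1) unfolding W_def c_def w_def by blast
    show "\<forall>a\<in>P. \<forall>e\<in>w. beta a e = c e"
      using up(4) code_P \<open>P \<subseteq> X\<close> \<open>w \<subseteq> below k\<close> by (metis subsetD)
    show "\<forall>a\<in>P. \<forall>e\<in>below k - w. beta a e < c e"
      using up(1,2) code_P \<open>P \<subseteq> X\<close> by (metis DiffE order.not_eq_order_implies_strict subsetD)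
    show "\<forall>a\<in>P. \<forall>e\<in>below k - w. \<forall>g\<in>G. g < c e \<longrightarrow> g < beta a e"
      using up(3) code_P \<open>P \<subseteq> X\<close> by (metis DiffE subsetD)
  qed
qed

end

theorem claim6p1:
  fixes t k s :: "'o::wellorder"
    and D :: "'o set set"
    and beta :: "'o \<Rightarrow> 'o \<Rightarrow> 'o"
    and X :: "'o set"
  assumes theta_reg: "cof t = t"
    and kappa_card: "is_cardinal k"
    and sigma_reg: "cof s = s"
    and sigma_gt: "(cardSuc (card_of (below k)), card_of (below s)) \<in> ordLess"
    and sigma_pow: "\<forall>a<s. (BNF_Cardinal_Arithmetic.cexp (card_of (below a)) (card_of (below k)), card_of (below s)) \<in> ordLess"
    and D_filter: "complete_filter D t s"
    and D_tails: "\<forall>a<t. below t - below a \<in> D"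
    and beta_bounded: "\<exists>b. \<forall>a<t. \<forall>e<k. beta a e < b"
    and X_sub: "X \<subseteq> below t"
    and X_pos: "pos_mod D t X"
  shows "\<exists>bs :: 'o \<Rightarrow> 'o. \<exists>w. w \<subseteq> below k \<and>
           (\<forall>e\<in>below k - w. s \<le> cof (bs e) \<and> cof (bs e) \<le> t) \<and>
           (let B = {a\<in>X. (\<forall>e\<in>w. beta a e = bs e) \<and>
                       (\<forall>e\<in>below k - w.
                          osup {bs z | z. z < k \<and> bs z < bs e} < beta a e \<and> beta a e < bs e)}
            in pos_mod D t B \<and>
               (\<forall>b' :: 'o \<Rightarrow> 'o. (\<forall>e\<in>below k - w. b' e < bs e) \<longrightarrow>
                  pos_mod D t {a\<in>B. \<forall>e\<in>below k - w. b' e < beta a e}))"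
proof -
  interpret pattern_setting k s t D beta X
    by unfold_locales (fact sigma_reg sigma_gt D_filter beta_bounded X_sub X_pos)+
  obtain bs w where "good_pattern t k s D beta X bs w"
    using good_pattern_finite good_pattern_infinite[OF sigma_pow] by blast
  then show ?thesis unfolding good_pattern_def pos_cofinal_def pattern_set_def Let_def by blast
qed

end
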